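(* Let $(X,d_X)$ and $(Y,d_Y)$ be geodesic spaces with monotone moduli of weak uniform convexity $\eta_X$ and $\eta_Y$, respectively. Let $\theta\in X$, $\tau\in Y$ and let $Z=X\sqcup_\theta Y$ be the gluing of $X$ and $Y$ obtained by identifying $\theta$ and $\tau$. Then $Z$ is weakly uniformly convex, with modulus of weak uniform convexity \[\eta(a,r,\varepsilon)=\begin{cases}\min\{\eta_X(a,r,\varepsilon),\ \eta_Y(\tau,r,\varepsilon)\varepsilon/2,\ \varepsilon/4,\ \eta_X(a,r,\varepsilon/4)\}, & a\in X,\\ \min\{\eta_Y(a,r,\varepsilon),\ \eta_X(\theta,r,\varepsilon)\varepsilon/2,\ \varepsilon/4,\ \eta_Y(a,r,\varepsilon/4)\}, & a\in Y.\end{cases}\]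
   Context: For a geodesic space $W$ (metric space in which any two points are joined by a distance-preserving path from an interval, whose image is a geodesic segment), a modulus of weak uniform convexity is a map $\eta:W\times(0,\infty)\times(0,2]\to(0,1]$ such that for all $a\in W$, $r>0$, $\varepsilon\in(0,2]$, all $x,y\in W$ and every geodesic segment $[x,y]$ with midpoint $m(x,y)$: if $d(a,x)\le r$, $d(a,y)\le r$ and $d(x,y)\ge\varepsilon r$, then $d(a,m(x,y))\le(1-\eta(a,r,\varepsilon))r$. $W$ is weakly uniformly convex if it admits such a modulus. A modulus is monotone if it is nonincreasing in its second argument. The gluing $X\sqcup_\theta Y$ is the quotient of the disjoint union $X\sqcup Y$ by the identification $\theta\sim\tau$, with $X$ and $Y$ identified with their images, equipped with the metric $d(x,y)=d_X(x,y)$ if $x,y\in X$, $d(x,y)=d_Y(x,y)$ if $x,y\in Y$, and $d(x,y)=d_X(x,\theta)+d_Y(\tau,y)$ if $x\in X$, $y\in Y$. *)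

theory Defs
  imports "HOL-Analysis.Analysis"
begin

definition geodesic_path :: "'a set \<Rightarrow> ('a \<Rightarrow> 'a \<Rightarrow> real) \<Rightarrow> 'a \<Rightarrow> 'a \<Rightarrow> (real \<Rightarrow> 'a) \<Rightarrow> bool" where
  "geodesic_path M d x y g \<longleftrightarrow>
     g \<in> {0..d x y} \<rightarrow> M \<and> g 0 = x \<and> g (d x y) = y \<and>
     (\<forall>s\<in>{0..d x y}. \<forall>t\<in>{0..d x y}. d (g s) (g t) = \<bar>s - t\<bar>)"

definition geodesic_space :: "'a set \<Rightarrow> ('a \<Rightarrow> 'a \<Rightarrow> real) \<Rightarrow> bool" where
  "geodesic_space M d \<longleftrightarrow> Metric_space M d \<and>
     (\<forall>x\<in>M. \<forall>y\<in>M. \<exists>g. geodesic_path M d x y g)"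

definition modulus_wuc :: "'a set \<Rightarrow> ('a \<Rightarrow> 'a \<Rightarrow> real) \<Rightarrow> ('a \<Rightarrow> real \<Rightarrow> real \<Rightarrow> real) \<Rightarrow> bool" where
  "modulus_wuc M d \<eta> \<longleftrightarrow>
     (\<forall>a\<in>M. \<forall>r>0. \<forall>\<epsilon>. 0 < \<epsilon> \<and> \<epsilon> \<le> 2 \<longrightarrow> 0 < \<eta> a r \<epsilon> \<and> \<eta> a r \<epsilon> \<le> 1) \<and>
     (\<forall>a\<in>M. \<forall>r>0. \<forall>\<epsilon>. 0 < \<epsilon> \<and> \<epsilon> \<le> 2 \<longrightarrow>
        (\<forall>x\<in>M. \<forall>y\<in>M. \<forall>g. geodesic_path M d x y g \<and> d a x \<le> r \<and> d a y \<le> r \<and> d x y \<ge> \<epsilon> * r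
            \<longrightarrow> d a (g (d x y / 2)) \<le> (1 - \<eta> a r \<epsilon>) * r))"

definition weakly_uniformly_convex :: "'a set \<Rightarrow> ('a \<Rightarrow> 'a \<Rightarrow> real) \<Rightarrow> bool" where
  "weakly_uniformly_convex M d \<longleftrightarrow> (\<exists>\<eta>. modulus_wuc M d \<eta>)"

definition monotone_modulus_wuc :: "'a set \<Rightarrow> ('a \<Rightarrow> 'a \<Rightarrow> real) \<Rightarrow> ('a \<Rightarrow> real \<Rightarrow> real \<Rightarrow> real) \<Rightarrow> bool" where
  "monotone_modulus_wuc M d \<eta> \<longleftrightarrow> modulus_wuc M d \<eta> \<and>
     (\<forall>a\<in>M. \<forall>\<epsilon>. 0 < \<epsilon> \<and> \<epsilon> \<le> 2 \<longrightarrow> (\<forall>r1 r2. 0 < r1 \<and> r1 \<le> r2 \<longrightarrow> \<eta> a r2 \<epsilon> \<le> \<eta> a r1 \<epsilon>))"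

text \<open>Gluing X and Y along theta ~ tau, modelled in the sum type: the glued point is Inl theta,
  the remaining points of Y are Inr y for y \<noteq> tau.\<close>
definition glue_carrier :: "'a set \<Rightarrow> 'b set \<Rightarrow> 'b \<Rightarrow> ('a + 'b) set" where
  "glue_carrier X Y \<tau> = Inl ` X \<union> Inr ` (Y - {\<tau>})"

fun glue_dist :: "('a \<Rightarrow> 'a \<Rightarrow> real) \<Rightarrow> ('b \<Rightarrow> 'b \<Rightarrow> real) \<Rightarrow> 'a \<Rightarrow> 'b \<Rightarrow> ('a + 'b) \<Rightarrow> ('a + 'b) \<Rightarrow> real" where
  "glue_dist dX dY \<theta> \<tau> (Inl x) (Inl x') = dX x x'"
| "glue_dist dX dY \<theta> \<tau> (Inr y) (Inr y') = dY y y'"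
| "glue_dist dX dY \<theta> \<tau> (Inl x) (Inr y) = dX x \<theta> + dY \<tau> y"
| "glue_dist dX dY \<theta> \<tau> (Inr y) (Inl x) = dY y \<tau> + dX \<theta> x"

text \<open>The modulus from the statement; the glued point Inl theta is treated as a point of X.\<close>
fun glue_modulus :: "('a \<Rightarrow> real \<Rightarrow> real \<Rightarrow> real) \<Rightarrow> ('b \<Rightarrow> real \<Rightarrow> real \<Rightarrow> real) \<Rightarrow> 'a \<Rightarrow> 'b
     \<Rightarrow> ('a + 'b) \<Rightarrow> real \<Rightarrow> real \<Rightarrow> real" where
  "glue_modulus \<eta>X \<eta>Y \<theta> \<tau> (Inl a) r \<epsilon> =
     Min {\<eta>X a r \<epsilon>, \<eta>Y \<tau> r \<epsilon> * \<epsilon> / 2, \<epsilon> / 4, \<eta>X a r (\<epsilon> / 4)}"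
| "glue_modulus \<eta>X \<eta>Y \<theta> \<tau> (Inr a) r \<epsilon> =
     Min {\<eta>Y a r \<epsilon>, \<eta>X \<theta> r \<epsilon> * \<epsilon> / 2, \<epsilon> / 4, \<eta>Y a r (\<epsilon> / 4)}"

end

theory Submission
  imports Defs
begin

text \<open>The glued metric is the sum of the distances of the two retractions onto X and Y, so a
  geodesic of the gluing either stays in one piece or runs inside X up to the gluing point and
  inside Y afterwards. Between two points of one piece the midpoint is controlled by the modulus
  of that piece, taken at the gluing point when the centre lies in the other piece. When the
  geodesic crosses, its midpoint either lies in the far piece, where it is closer to the centre
  by a definite fraction of the length, or it is the midpoint of a prolonged segment in the near
  piece, which is controlled by convexity of balls and the modulus at \<epsilon> / 4.\<close>

definition isometric_on_interval :: "'a set \<Rightarrow> ('a \<Rightarrow> 'a \<Rightarrow> real) \<Rightarrow> real \<Rightarrow> real \<Rightarrow> (real \<Rightarrow> 'a) \<Rightarrow> bool" where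
  "isometric_on_interval M d lo hi h \<longleftrightarrow>
     h \<in> {lo..hi} \<rightarrow> M \<and> (\<forall>s\<in>{lo..hi}. \<forall>t\<in>{lo..hi}. d (h s) (h t) = \<bar>s - t\<bar>)"

lemma geodesic_path_iff_isometric_on_interval:
  "geodesic_path M d x y g \<longleftrightarrow> isometric_on_interval M d 0 (d x y) g \<and> g 0 = x \<and> g (d x y) = y"
  unfolding geodesic_path_def isometric_on_interval_def by auto

lemma isometric_on_intervalD:
  assumes "isometric_on_interval M d lo hi h"
  shows "t \<in> {lo..hi} \<Longrightarrow> h t \<in> M"
    and "s \<in> {lo..hi} \<Longrightarrow> t \<in> {lo..hi} \<Longrightarrow> d (h s) (h t) = \<bar>s - t\<bar>"
  using assms unfolding isometric_on_interval_def by auto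

lemma isometric_on_interval_subset:
  assumes "isometric_on_interval M d lo hi h" "lo \<le> lo'" "hi' \<le> hi"
  shows "isometric_on_interval M d lo' hi' h"
  using assms unfolding isometric_on_interval_def by auto

lemma isometric_on_interval_geodesic_path:
  assumes h: "isometric_on_interval M d lo hi h" and st: "lo \<le> s" "s \<le> t" "t \<le> hi"
  shows "geodesic_path M d (h s) (h t) (\<lambda>u. h (s + u))"
proof -
  have "d (h s) (h t) = t - s" using isometric_on_intervalD(2)[OF h, of s t] st by simp
  then show ?thesis
    using h st unfolding geodesic_path_def isometric_on_interval_def by auto
qed

lemma geodesic_path_reverse:
  assumes "geodesic_path M d x y g" and "\<And>u v. d u v = d v u"
  shows "geodesic_path M d y x (\<lambda>t. g (d x y - t))"
  using assms unfolding geodesic_path_def by (auto simp: Pi_def)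

lemma geodesic_path_isometric_image:
  assumes geo: "geodesic_path M d x y g" and x: "x \<in> M" and y: "y \<in> M"
    and f: "f \<in> M \<rightarrow> M'" and iso: "\<And>u v. u \<in> M \<Longrightarrow> v \<in> M \<Longrightarrow> d' (f u) (f v) = d u v"
  shows "geodesic_path M' d' (f x) (f y) (\<lambda>t. f (g t))"
  using assms unfolding geodesic_path_def iso[OF x y] by (auto simp: Pi_def)

lemma modulus_wucD:
  assumes "modulus_wuc M d \<eta>" "a \<in> M" "x \<in> M" "y \<in> M" "geodesic_path M d x y g"
    "d a x \<le> r" "d a y \<le> r" "\<epsilon> * r \<le> d x y" "0 < r" "0 < \<epsilon>" "\<epsilon> \<le> 2"
  shows "d a (g (d x y / 2)) \<le> (1 - \<eta> a r \<epsilon>) * r"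
  using assms unfolding modulus_wuc_def by blast

lemma modulus_wuc_pos:
  assumes "modulus_wuc M d \<eta>" "a \<in> M" "0 < r" "0 < \<epsilon>" "\<epsilon> \<le> 2"
  shows "0 < \<eta> a r \<epsilon>"
  using assms unfolding modulus_wuc_def by blast

lemma one_minus_mult_antimono:
  fixes m e r :: real
  assumes "m \<le> e" "0 \<le> r"
  shows "(1 - e) * r \<le> (1 - m) * r"
  using assms by (simp add: mult_right_mono)

lemma modulus_wuc_midpoint_subsegment:
  assumes mod: "modulus_wuc M d \<eta>" and a: "a \<in> M" and h: "isometric_on_interval M d lo hi h"
    and st: "lo \<le> s" "t \<le> hi" and as: "d a (h s) \<le> r" and at: "d a (h t) \<le> r"
    and len: "\<epsilon> * r \<le> t - s" and r: "0 < r" and e: "0 < \<epsilon>" "\<epsilon> \<le> 2"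
  shows "d a (h ((s + t) / 2)) \<le> (1 - \<eta> a r \<epsilon>) * r"
proof -
  have "s \<le> t" using len mult_pos_pos[OF e(1) r] by linarith
  then have geo: "geodesic_path M d (h s) (h t) (\<lambda>u. h (s + u))" and dst: "d (h s) (h t) = t - s"
    using isometric_on_interval_geodesic_path[OF h] isometric_on_intervalD(2)[OF h, of s t] st
    by auto
  have "h s \<in> M" "h t \<in> M" using isometric_on_intervalD(1)[OF h] st \<open>s \<le> t\<close> by auto
  from modulus_wucD[OF mod a this geo as at _ r e] len dst
  show ?thesis by (simp add: field_simps)
qed

context Metric_space
begin

text \<open>A farthest point from a inside the segment would be the midpoint of a symmetric subsegment
  around it, and the modulus pushes that midpoint strictly closer to a.\<close>
lemma modulus_wuc_ball_convex:
  assumes mod: "modulus_wuc M d \<eta>" and a: "a \<in> M"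
    and h: "isometric_on_interval M d lo hi h" and lh: "lo \<le> hi"
    and lo: "d a (h lo) \<le> R" and hi: "d a (h hi) \<le> R" and u: "u \<in> {lo..hi}"
  shows "d a (h u) \<le> R"
proof (rule ccontr)
  assume far: "\<not> d a (h u) \<le> R"
  define f where "f t = d a (h t)" for t
  have hM: "t \<in> {lo..hi} \<Longrightarrow> h t \<in> M" for t using isometric_on_intervalD(1)[OF h] .
  have "1-lipschitz_on {lo..hi} f"
  proof (rule lipschitz_onI)
    fix s t assume s: "s \<in> {lo..hi}" and t: "t \<in> {lo..hi}"
    have "d a (h s) \<le> d a (h t) + d (h t) (h s)" "d a (h t) \<le> d a (h s) + d (h s) (h t)"
      using triangle a hM s t by auto
    then show "dist (f s) (f t) \<le> 1 * dist s t"
      using isometric_on_intervalD(2)[OF h] s t commute by (auto simp: f_def dist_real_def)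
  qed simp
  then have cont: "continuous_on {lo..hi} f" by (rule lipschitz_on_continuous_on)
  then obtain t1 where t1: "t1 \<in> {lo..hi}" and max: "\<forall>t\<in>{lo..hi}. f t \<le> f t1"
    using continuous_attains_sup[OF compact_Icc _ cont] lh by auto
  have big: "R < f t1" using max u far by (force simp: f_def)
  then have fpos: "0 < f t1" using lo nonneg[of a "h lo"] by linarith
  have "t1 \<noteq> lo" "t1 \<noteq> hi" using big lo hi by (auto simp: f_def)
  define \<delta> where "\<delta> = min (t1 - lo) (hi - t1)"
  have \<delta>: "0 < \<delta>" "lo \<le> t1 - \<delta>" "t1 + \<delta> \<le> hi" using t1 \<open>t1 \<noteq> lo\<close> \<open>t1 \<noteq> hi\<close> by (auto simp: \<delta>_def)
  have ends: "f (t1 - \<delta>) \<le> f t1" "f (t1 + \<delta>) \<le> f t1" using max \<delta> t1 by auto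
  have "2 * \<delta> = d (h (t1 - \<delta>)) (h (t1 + \<delta>))"
    using isometric_on_intervalD(2)[OF h] \<delta> t1 by auto
  also have "\<dots> \<le> d (h (t1 - \<delta>)) a + d a (h (t1 + \<delta>))"
    using triangle a hM \<delta> t1 by auto
  finally have "2 * \<delta> / f t1 \<le> 2" using ends fpos commute by (simp add: f_def divide_le_eq)
  then have "f ((t1 - \<delta> + (t1 + \<delta>)) / 2) \<le> (1 - \<eta> a (f t1) (2 * \<delta> / f t1)) * f t1"
    unfolding f_def using ends fpos \<delta>
    by (intro modulus_wuc_midpoint_subsegment[OF mod a h]) (auto simp: f_def)
  moreover have "0 < \<eta> a (f t1) (2 * \<delta> / f t1)"
    using modulus_wuc_pos[OF mod a fpos] \<open>2 * \<delta> / f t1 \<le> 2\<close> \<delta> fpos by auto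
  ultimately show False using mult_pos_pos[OF fpos] by (fastforce simp: algebra_simps)
qed

text \<open>Prolong the segment h past h p by a further length q: the point h ((p + q) / 2) is the
  midpoint of the prolonged segment, whose far end lies at least q inside the ball.\<close>
lemma modulus_wuc_prolonged_midpoint:
  assumes mod: "modulus_wuc M d \<eta>" and a: "a \<in> M" and h: "isometric_on_interval M d 0 p h"
    and start: "d a (h 0) \<le> r" and stop: "d a (h p) \<le> r - q" and q: "0 \<le> q" "q < p"
    and len: "\<epsilon> * r \<le> p + q" and r: "0 < r" and e: "0 < \<epsilon>" "\<epsilon> \<le> 2"
  shows "d a (h ((p + q) / 2)) \<le> (1 - min (\<eta> a r (\<epsilon> / 4)) (\<epsilon> / 4)) * r"
proof -
  define m where "m = min (\<eta> a r (\<epsilon> / 4)) (\<epsilon> / 4)"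
  have e4: "0 < \<epsilon> / 4" "\<epsilon> / 4 \<le> 2" using e by auto
  have weaken: "d a (h t) \<le> (1 - m) * r" if "d a (h t) \<le> (1 - \<eta> a r (\<epsilon> / 4)) * r" for t
  proof -
    have "(1 - \<eta> a r (\<epsilon> / 4)) * r \<le> (1 - m) * r"
      by (rule one_minus_mult_antimono) (use r in \<open>auto simp: m_def\<close>)
    with that show ?thesis by linarith
  qed
  show ?thesis
  proof (cases "\<epsilon> * r / 4 \<le> q")
    case True
    have "d a (h ((0 + p) / 2)) \<le> (1 - \<eta> a r (\<epsilon> / 4)) * r"
      using start stop True q by (intro modulus_wuc_midpoint_subsegment[OF mod a h _ _ _ _ _ r e4]) auto
    then have mid: "d a (h (p / 2)) \<le> (1 - m) * r" using weaken by simp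
    have "(1 - \<epsilon> / 4) * r = r - \<epsilon> * r / 4" by (simp add: algebra_simps)
    then have "d a (h p) \<le> (1 - \<epsilon> / 4) * r" using stop True by linarith
    also have "\<dots> \<le> (1 - m) * r"
      by (rule one_minus_mult_antimono) (use r in \<open>auto simp: m_def\<close>)
    finally have stop': "d a (h p) \<le> (1 - m) * r" .
    have sub: "isometric_on_interval M d (p / 2) p h"
      using q by (intro isometric_on_interval_subset[OF h]) auto
    show ?thesis unfolding m_def[symmetric]
      by (rule modulus_wuc_ball_convex[OF mod a sub _ mid stop']) (use q in auto)
  next
    case False
    have "d a (h q) \<le> r"
      by (rule modulus_wuc_ball_convex[OF mod a h _ start]) (use stop q in auto)
    then have "d a (h ((q + p) / 2)) \<le> (1 - \<eta> a r (\<epsilon> / 4)) * r"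
      using stop q False len
      by (intro modulus_wuc_midpoint_subsegment[OF mod a h _ _ _ _ _ r e4]) auto
    then show ?thesis using weaken by (simp add: m_def add.commute)
  qed
qed

end

lemma (in Metric_space12) sum_dist_isometric_between:
  assumes h1: "h1 \<in> {0..D} \<rightarrow> M1" and h2: "h2 \<in> {0..D} \<rightarrow> M2"
    and iso: "\<And>s t. s \<in> {0..D} \<Longrightarrow> t \<in> {0..D} \<Longrightarrow> d1 (h1 s) (h1 t) + d2 (h2 s) (h2 t) = \<bar>s - t\<bar>"
    and t: "t \<in> {0..D}"
  shows "d1 (h1 0) (h1 t) + d1 (h1 t) (h1 D) = d1 (h1 0) (h1 D)"
    and "d2 (h2 0) (h2 t) + d2 (h2 t) (h2 D) = d2 (h2 0) (h2 D)"
proof -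
  have ends: "0 \<in> {0..D}" "D \<in> {0..D}" using t by auto
  have "d1 (h1 0) (h1 D) \<le> d1 (h1 0) (h1 t) + d1 (h1 t) (h1 D)"
    "d2 (h2 0) (h2 D) \<le> d2 (h2 0) (h2 t) + d2 (h2 t) (h2 D)"
    using M1.triangle M2.triangle h1 h2 ends t by blast+
  moreover have "d1 (h1 0) (h1 t) + d2 (h2 0) (h2 t) = t" "d1 (h1 t) (h1 D) + d2 (h2 t) (h2 D) = D - t"
    "d1 (h1 0) (h1 D) + d2 (h2 0) (h2 D) = D"
    using iso[OF ends(1) t] iso[OF t ends(2)] iso[OF ends] t by auto
  ultimately show "d1 (h1 0) (h1 t) + d1 (h1 t) (h1 D) = d1 (h1 0) (h1 D)"
    and "d2 (h2 0) (h2 t) + d2 (h2 t) (h2 D) = d2 (h2 0) (h2 D)"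
    by linarith+
qed

lemma (in Metric_space12) sum_dist_isometric_const_component:
  assumes h1: "h1 \<in> {0..D} \<rightarrow> M1" and h2: "h2 \<in> {0..D} \<rightarrow> M2"
    and iso: "\<And>s t. s \<in> {0..D} \<Longrightarrow> t \<in> {0..D} \<Longrightarrow> d1 (h1 s) (h1 t) + d2 (h2 s) (h2 t) = \<bar>s - t\<bar>"
    and loop: "h2 D = h2 0"
  shows "\<forall>t\<in>{0..D}. h2 t = h2 0" and "isometric_on_interval M1 d1 0 D h1"
proof -
  show const: "\<forall>t\<in>{0..D}. h2 t = h2 0"
  proof
    fix t assume t: "t \<in> {0..D}"
    have "h2 0 \<in> M2" "h2 t \<in> M2" using h2 t by auto
    then have "d2 (h2 0) (h2 t) + d2 (h2 t) (h2 0) = 0"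
      using sum_dist_isometric_between(2)[OF h1 h2 iso t] loop by simp
    then have "d2 (h2 0) (h2 t) = 0" using M2.nonneg by (metis add_nonneg_eq_0_iff)
    then show "h2 t = h2 0" using \<open>h2 0 \<in> M2\<close> \<open>h2 t \<in> M2\<close> M2.zero[of "h2 0" "h2 t"] by simp
  qed
  show "isometric_on_interval M1 d1 0 D h1"
    unfolding isometric_on_interval_def
  proof (intro conjI h1 ballI)
    fix s t assume s: "s \<in> {0..D}" and t: "t \<in> {0..D}"
    have "h2 s \<in> M2" using h2 s by auto
    then have "d2 (h2 s) (h2 t) = 0" using const s t by (metis M2.zero)
    then show "d1 (h1 s) (h1 t) = \<bar>s - t\<bar>" using iso[OF s t] by simp
  qed
qed

fun glue_retract_left :: "'a \<Rightarrow> 'a + 'b \<Rightarrow> 'a" where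
  "glue_retract_left \<theta> (Inl x) = x"
| "glue_retract_left \<theta> (Inr y) = \<theta>"

fun glue_retract_right :: "'b \<Rightarrow> 'a + 'b \<Rightarrow> 'b" where
  "glue_retract_right \<tau> (Inl x) = \<tau>"
| "glue_retract_right \<tau> (Inr y) = y"

definition glue_swap :: "'a \<Rightarrow> 'b \<Rightarrow> 'a + 'b \<Rightarrow> 'b + 'a" where
  "glue_swap \<theta> \<tau> u = (case u of Inl x \<Rightarrow> if x = \<theta> then Inl \<tau> else Inr x | Inr y \<Rightarrow> Inl y)"

lemma glue_retracts_swap:
  "glue_retract_left \<tau> (glue_swap \<theta> \<tau> u) = glue_retract_right \<tau> u"
  "glue_retract_right \<theta> (glue_swap \<theta> \<tau> u) = glue_retract_left \<theta> u"
  by (cases u; simp add: glue_swap_def)+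

locale metric_gluing = X: Metric_space X dX + Y: Metric_space Y dY
  for X :: "'a set" and dX and Y :: "'b set" and dY +
  fixes \<theta> :: 'a and \<tau> :: 'b
  assumes base_points: "\<theta> \<in> X" "\<tau> \<in> Y"

sublocale metric_gluing \<subseteq> Metric_space12 X dX Y dY ..

context metric_gluing
begin

abbreviation "Z \<equiv> glue_carrier X Y \<tau>"
abbreviation "dZ \<equiv> glue_dist dX dY \<theta> \<tau>"
abbreviation "\<pi>X \<equiv> glue_retract_left \<theta>"
abbreviation "\<pi>Y \<equiv> glue_retract_right \<tau>"

lemma metric_gluing_swap: "metric_gluing Y dY X dX \<tau> \<theta>"
  using base_points by unfold_locales

text \<open>Z is isometric to the subset of X \<times> Y carrying the sum metric on which one of the two
  coordinates is a base point.\<close>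
lemma glue_dist_eq_retracts: "dZ u v = dX (\<pi>X u) (\<pi>X v) + dY (\<pi>Y u) (\<pi>Y v)"
  using base_points by (cases u; cases v) simp_all

lemma glue_dist_commute: "dZ u v = dZ v u"
  by (simp add: glue_dist_eq_retracts X.commute Y.commute)

lemma glue_carrier_retracts:
  assumes "u \<in> Z"
  shows "\<pi>X u \<in> X" "\<pi>Y u \<in> Y" "\<pi>X u = \<theta> \<or> \<pi>Y u = \<tau>"
  using assms base_points unfolding glue_carrier_def by auto

lemma glue_swap_mem: "u \<in> Z \<Longrightarrow> glue_swap \<theta> \<tau> u \<in> glue_carrier Y X \<theta>"
  using base_points unfolding glue_carrier_def glue_swap_def by auto

lemma glue_swap_dist: "glue_dist dY dX \<tau> \<theta> (glue_swap \<theta> \<tau> u) (glue_swap \<theta> \<tau> v) = dZ u v"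
proof -
  interpret swapped: metric_gluing Y dY X dX \<tau> \<theta> by (rule metric_gluing_swap)
  show ?thesis by (simp add: swapped.glue_dist_eq_retracts glue_dist_eq_retracts glue_retracts_swap)
qed

lemma geodesic_retracts:
  assumes geo: "geodesic_path Z dZ u v g"
  shows "(\<lambda>t. \<pi>X (g t)) \<in> {0..dZ u v} \<rightarrow> X" and "(\<lambda>t. \<pi>Y (g t)) \<in> {0..dZ u v} \<rightarrow> Y"
    and "t \<in> {0..dZ u v} \<Longrightarrow> \<pi>X (g t) = \<theta> \<or> \<pi>Y (g t) = \<tau>"
    and "s \<in> {0..dZ u v} \<Longrightarrow> t \<in> {0..dZ u v} \<Longrightarrow>
           dX (\<pi>X (g s)) (\<pi>X (g t)) + dY (\<pi>Y (g s)) (\<pi>Y (g t)) = \<bar>s - t\<bar>"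
proof -
  have gZ: "t \<in> {0..dZ u v} \<Longrightarrow> g t \<in> Z" for t using geo unfolding geodesic_path_def by auto
  show "(\<lambda>t. \<pi>X (g t)) \<in> {0..dZ u v} \<rightarrow> X" "(\<lambda>t. \<pi>Y (g t)) \<in> {0..dZ u v} \<rightarrow> Y"
    using glue_carrier_retracts gZ by auto
  show "t \<in> {0..dZ u v} \<Longrightarrow> \<pi>X (g t) = \<theta> \<or> \<pi>Y (g t) = \<tau>"
    using glue_carrier_retracts(3) gZ by blast
  show "dX (\<pi>X (g s)) (\<pi>X (g t)) + dY (\<pi>Y (g s)) (\<pi>Y (g t)) = \<bar>s - t\<bar>"
    if "s \<in> {0..dZ u v}" "t \<in> {0..dZ u v}" for s t
  proof -
    have "dZ (g s) (g t) = \<bar>s - t\<bar>" using geo that unfolding geodesic_path_def by blast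
    then show ?thesis by (simp only: glue_dist_eq_retracts)
  qed
qed

lemma geodesic_left_left:
  assumes x: "x \<in> X" and y: "y \<in> X" and geo: "geodesic_path Z dZ (Inl x) (Inl y) g"
  shows "geodesic_path X dX x y (\<lambda>t. \<pi>X (g t))" and "t \<in> {0..dX x y} \<Longrightarrow> \<pi>Y (g t) = \<tau>"
proof -
  have ends: "g 0 = Inl x" "g (dX x y) = Inl y" using geo unfolding geodesic_path_def by auto
  have "dZ (Inl x) (Inl y) = dX x y" by simp
  note retracts = geodesic_retracts[OF geo, unfolded this]
  have "\<pi>Y (g (dX x y)) = \<pi>Y (g 0)" using ends by simp
  note const = sum_dist_isometric_const_component[OF retracts(1,2,4) this]
  show "geodesic_path X dX x y (\<lambda>t. \<pi>X (g t))"
    unfolding geodesic_path_iff_isometric_on_interval by (intro conjI const(2)) (simp_all add: ends)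
  show "\<pi>Y (g t) = \<tau>" if "t \<in> {0..dX x y}"
  proof -
    have "\<pi>Y (g t) = \<pi>Y (g 0)" using const(1) that by blast
    then show ?thesis using ends(1) by simp
  qed
qed

lemma geodesic_right_right:
  assumes x: "x \<in> Y" and y: "y \<in> Y" and geo: "geodesic_path Z dZ (Inr x) (Inr y) g"
  shows "geodesic_path Y dY x y (\<lambda>t. \<pi>Y (g t))" and "t \<in> {0..dY x y} \<Longrightarrow> \<pi>X (g t) = \<theta>"
proof -
  interpret swapped: metric_gluing Y dY X dX \<tau> \<theta> by (rule metric_gluing_swap)
  have ends: "g 0 = Inr x" "g (dY x y) = Inr y" using geo unfolding geodesic_path_def by auto
  have "dZ (Inr x) (Inr y) = dY x y" using base_points by simp
  note retracts = geodesic_retracts[OF geo, unfolded this]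
  have iso: "dY (\<pi>Y (g s)) (\<pi>Y (g t)) + dX (\<pi>X (g s)) (\<pi>X (g t)) = \<bar>s - t\<bar>"
    if "s \<in> {0..dY x y}" "t \<in> {0..dY x y}" for s t
    using retracts(4)[OF that] by linarith
  have "\<pi>X (g (dY x y)) = \<pi>X (g 0)" using ends by simp
  note const = swapped.sum_dist_isometric_const_component[OF retracts(2,1) iso this]
  show "geodesic_path Y dY x y (\<lambda>t. \<pi>Y (g t))"
    unfolding geodesic_path_iff_isometric_on_interval by (intro conjI const(2)) (simp_all add: ends)
  show "\<pi>X (g t) = \<theta>" if "t \<in> {0..dY x y}"
  proof -
    have "\<pi>X (g t) = \<pi>X (g 0)" using const(1) that by blast
    then show ?thesis using ends(1) by simp
  qed
qed

lemma geodesic_left_right: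
  assumes x: "x \<in> X" and y: "y \<in> Y" and geo: "geodesic_path Z dZ (Inl x) (Inr y) g"
    and t: "t \<in> {0..dX x \<theta> + dY \<tau> y}"
  shows "t \<le> dX x \<theta> \<Longrightarrow> \<pi>Y (g t) = \<tau>" and "dX x \<theta> \<le> t \<Longrightarrow> \<pi>X (g t) = \<theta>"
proof -
  have ends: "g 0 = Inl x" "g (dX x \<theta> + dY \<tau> y) = Inr y"
    using geo unfolding geodesic_path_def by auto
  have "dZ (Inl x) (Inr y) = dX x \<theta> + dY \<tau> y" by simp
  note retracts = geodesic_retracts[OF geo, unfolded this]
  have gX: "\<pi>X (g t) \<in> X" and gY: "\<pi>Y (g t) \<in> Y" using retracts(1,2) t by auto
  have start: "dX x (\<pi>X (g t)) + dY \<tau> (\<pi>Y (g t)) = t"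
    using retracts(4)[of 0 t] t ends by auto
  have between: "dX x (\<pi>X (g t)) + dX (\<pi>X (g t)) \<theta> = dX x \<theta>"
    using sum_dist_isometric_between(1)[OF retracts(1,2,4) t] ends by simp
  show "\<pi>Y (g t) = \<tau>" if "t \<le> dX x \<theta>"
  proof (cases "\<pi>X (g t) = \<theta>")
    case True
    then have "dY \<tau> (\<pi>Y (g t)) \<le> 0" using start that by simp
    then show ?thesis using gY base_points Y.nonneg[of \<tau> "\<pi>Y (g t)"] by simp
  qed (use retracts(3) t in blast)
  show "\<pi>X (g t) = \<theta>" if "dX x \<theta> \<le> t"
  proof (cases "\<pi>Y (g t) = \<tau>")
    case True
    then have "dX (\<pi>X (g t)) \<theta> \<le> 0" using start between that base_points by simp
    then show ?thesis using gX base_points X.nonneg[of "\<pi>X (g t)" \<theta>] by simp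
  qed (use retracts(3) t in blast)
qed

lemma glue_dist_Inl: "dZ (Inl b) w = dX b (\<pi>X w) + dY \<tau> (\<pi>Y w)"
  by (simp add: glue_dist_eq_retracts)

lemma midpoint_left_left:
  assumes modX: "modulus_wuc X dX \<eta>X" and b: "b \<in> X" and x: "x \<in> X" and y: "y \<in> X"
    and geo: "geodesic_path Z dZ (Inl x) (Inl y) g"
    and near_x: "dX b x \<le> r" and near_y: "dX b y \<le> r" and len: "\<epsilon> * r \<le> dX x y"
    and r: "0 < r" and e: "0 < \<epsilon>" "\<epsilon> \<le> 2"
  shows "dZ (Inl b) (g (dX x y / 2)) \<le> (1 - \<eta>X b r \<epsilon>) * r"
proof -
  have "dX x y / 2 \<in> {0..dX x y}" by simp
  then have "dZ (Inl b) (g (dX x y / 2)) = dX b (\<pi>X (g (dX x y / 2)))"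
    using geodesic_left_left(2)[OF x y geo] base_points by (simp add: glue_dist_Inl)
  also have "\<dots> \<le> (1 - \<eta>X b r \<epsilon>) * r"
    by (rule modulus_wucD[OF modX b x y geodesic_left_left(1)[OF x y geo] near_x near_y len r e])
  finally show ?thesis .
qed

text \<open>Both ends lie in the Y-ball of radius \<rho> = r - dX b \<theta> around \<tau>, and they are \<epsilon> r apart,
  so \<rho> \<ge> \<epsilon> r / 2: this is where the factor \<epsilon> / 2 comes from, and monotonicity of the
  modulus passes from radius \<rho> back to r.\<close>
lemma midpoint_right_right:
  assumes monoY: "monotone_modulus_wuc Y dY \<eta>Y" and b: "b \<in> X" and x: "x \<in> Y" and y: "y \<in> Y"
    and geo: "geodesic_path Z dZ (Inr x) (Inr y) g"
    and near_x: "dX b \<theta> + dY \<tau> x \<le> r" and near_y: "dX b \<theta> + dY \<tau> y \<le> r" and len: "\<epsilon> * r \<le> dY x y"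
    and r: "0 < r" and e: "0 < \<epsilon>" "\<epsilon> \<le> 2"
  shows "dZ (Inl b) (g (dY x y / 2)) \<le> (1 - \<eta>Y \<tau> r \<epsilon> * \<epsilon> / 2) * r"
proof -
  have modY: "modulus_wuc Y dY \<eta>Y" using monoY unfolding monotone_modulus_wuc_def by simp
  define \<rho> where "\<rho> = r - dX b \<theta>"
  define m where "m = \<pi>Y (g (dY x y / 2))"
  have "dY x y \<le> dY x \<tau> + dY \<tau> y" using Y.triangle[OF x _ y] base_points by simp
  then have "\<epsilon> * r / 2 \<le> \<rho>" using near_x near_y len Y.commute[of x \<tau>] by (simp add: \<rho>_def)
  moreover have "0 < \<epsilon> * r" using e r by simp
  ultimately have \<rho>: "0 < \<rho>" "\<rho> \<le> r" "\<epsilon> * r / 2 \<le> \<rho>" by (auto simp: \<rho>_def)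
  have "\<epsilon> * \<rho> \<le> dY x y" using len \<rho> e by (meson mult_left_mono less_imp_le order_trans)
  then have "dY \<tau> m \<le> (1 - \<eta>Y \<tau> \<rho> \<epsilon>) * \<rho>"
    unfolding m_def using near_x near_y base_points \<rho>(1) e
    by (intro modulus_wucD[OF modY _ x y geodesic_right_right(1)[OF x y geo]]) (auto simp: \<rho>_def)
  also have "\<dots> \<le> \<rho> - \<eta>Y \<tau> r \<epsilon> * \<rho>"
    using monoY base_points e \<rho> unfolding monotone_modulus_wuc_def
    by (simp add: algebra_simps mult_right_mono)
  also have "\<dots> \<le> \<rho> - \<eta>Y \<tau> r \<epsilon> * (\<epsilon> * r / 2)"
    using modulus_wuc_pos[OF modY _ r e] base_points \<rho>(3) by (simp add: mult_left_mono)
  finally have "dY \<tau> m \<le> \<rho> - \<eta>Y \<tau> r \<epsilon> * \<epsilon> / 2 * r" by simp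
  moreover have "dY x y / 2 \<in> {0..dY x y}" by simp
  ultimately show ?thesis
    using geodesic_right_right(2)[OF x y geo] base_points
    by (simp add: glue_dist_Inl m_def \<rho>_def algebra_simps)
qed

lemma midpoint_left_right:
  assumes modX: "modulus_wuc X dX \<eta>X" and b: "b \<in> X" and x: "x \<in> X" and y: "y \<in> Y"
    and geo: "geodesic_path Z dZ (Inl x) (Inr y) g"
    and near_x: "dX b x \<le> r" and near_y: "dX b \<theta> + dY \<tau> y \<le> r" and len: "\<epsilon> * r \<le> dX x \<theta> + dY \<tau> y"
    and r: "0 < r" and e: "0 < \<epsilon>" "\<epsilon> \<le> 2"
  shows "dZ (Inl b) (g ((dX x \<theta> + dY \<tau> y) / 2)) \<le> (1 - min (\<eta>X b r (\<epsilon> / 4)) (\<epsilon> / 4)) * r"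
proof -
  define p where "p = dX x \<theta>"
  define q where "q = dY \<tau> y"
  have pq: "0 \<le> p" "0 \<le> q" by (simp_all add: p_def q_def)
  have "dZ (Inl x) (Inr y) = p + q" by (simp add: p_def q_def)
  note retracts = geodesic_retracts[OF geo, unfolded this]
  note sides = geodesic_left_right[OF x y geo, folded p_def q_def]
  have ends: "g 0 = Inl x" using geo unfolding geodesic_path_def by auto
  have "dZ (Inl b) (g ((p + q) / 2)) \<le> (1 - min (\<eta>X b r (\<epsilon> / 4)) (\<epsilon> / 4)) * r"
  proof (cases "q < p")
    case True
    define h where "h t = \<pi>X (g t)" for t
    have iso: "isometric_on_interval X dX 0 p h"
      unfolding isometric_on_interval_def
    proof (intro conjI ballI)
      show "h \<in> {0..p} \<rightarrow> X" using retracts(1) pq by (auto simp: h_def)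
      fix s t assume "s \<in> {0..p}" "t \<in> {0..p}"
      then show "dX (h s) (h t) = \<bar>s - t\<bar>"
        using retracts(4)[of s t] sides(1)[of s] sides(1)[of t] pq base_points by (simp add: h_def)
    qed
    have "h 0 = x" "h p = \<theta>" using ends sides(2)[of p] pq by (simp_all add: h_def)
    then have "dX b (h ((p + q) / 2)) \<le> (1 - min (\<eta>X b r (\<epsilon> / 4)) (\<epsilon> / 4)) * r"
      using near_x near_y len True pq
      by (intro X.modulus_wuc_prolonged_midpoint[OF modX b iso _ _ _ _ _ r e]) (auto simp: p_def q_def)
    moreover have "\<pi>Y (g ((p + q) / 2)) = \<tau>" using sides(1) True pq by simp
    ultimately show ?thesis using base_points by (simp add: glue_dist_Inl h_def)
  next
    case False
    let ?t = "(p + q) / 2"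
    have t: "?t \<in> {0..p + q}" "p \<le> ?t" using False pq by auto
    have "dX x (\<pi>X (g ?t)) + dY \<tau> (\<pi>Y (g ?t)) = ?t"
      using retracts(4)[of 0 ?t] t ends by simp
    then have "dZ (Inl b) (g ?t) = dX b \<theta> + (?t - p)"
      using sides(2)[OF t] base_points by (simp add: glue_dist_Inl p_def)
    also have "\<dots> \<le> r - \<epsilon> * r / 4"
      using near_y len mult_pos_pos[OF e(1) r] unfolding p_def q_def by argo
    also have "\<dots> = (1 - \<epsilon> / 4) * r" by (simp add: algebra_simps)
    also have "\<dots> \<le> (1 - min (\<eta>X b r (\<epsilon> / 4)) (\<epsilon> / 4)) * r"
      using r by (intro one_minus_mult_antimono) auto
    finally show ?thesis .
  qed
  then show ?thesis by (simp only: p_def q_def)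
qed

lemma midpoint_Inl:
  assumes modX: "modulus_wuc X dX \<eta>X" and monoY: "monotone_modulus_wuc Y dY \<eta>Y" and b: "b \<in> X"
    and x: "x \<in> Z" and y: "y \<in> Z" and geo: "geodesic_path Z dZ x y g"
    and near_x: "dZ (Inl b) x \<le> r" and near_y: "dZ (Inl b) y \<le> r" and len: "\<epsilon> * r \<le> dZ x y"
    and r: "0 < r" and e: "0 < \<epsilon>" "\<epsilon> \<le> 2"
  shows "dZ (Inl b) (g (dZ x y / 2)) \<le> (1 - glue_modulus \<eta>X \<eta>Y \<theta> \<tau> (Inl b) r \<epsilon>) * r"
proof -
  have weaken: "dZ (Inl b) w \<le> (1 - glue_modulus \<eta>X \<eta>Y \<theta> \<tau> (Inl b) r \<epsilon>) * r"
    if "dZ (Inl b) w \<le> (1 - \<mu>) * r" "glue_modulus \<eta>X \<eta>Y \<theta> \<tau> (Inl b) r \<epsilon> \<le> \<mu>" for w \<mu>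
    using that(1) one_minus_mult_antimono[OF that(2), of r] r by linarith
  have ends: "\<pi>X x \<in> X" "\<pi>Y x \<in> Y" "\<pi>X y \<in> X" "\<pi>Y y \<in> Y"
    using glue_carrier_retracts x y by auto
  show ?thesis
  proof (cases x)
    case (Inl x')
    show ?thesis
    proof (cases y)
      case (Inl y')
      show ?thesis
        using midpoint_left_left[OF modX b _ _ geo[unfolded \<open>x = Inl x'\<close> \<open>y = Inl y'\<close>] _ _ _ r e]
          ends near_x near_y len \<open>x = Inl x'\<close> \<open>y = Inl y'\<close> by (intro weaken) auto
    next
      case (Inr y')
      show ?thesis
        using midpoint_left_right[OF modX b _ _ geo[unfolded \<open>x = Inl x'\<close> \<open>y = Inr y'\<close>] _ _ _ r e]
          ends near_x near_y len \<open>x = Inl x'\<close> \<open>y = Inr y'\<close> by (intro weaken) auto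
    qed
  next
    case (Inr x')
    show ?thesis
    proof (cases y)
      case (Inl y')
      have "geodesic_path Z dZ (Inl y') (Inr x') (\<lambda>t. g (dZ x y - t))"
        using geodesic_path_reverse[OF geo glue_dist_commute] \<open>x = Inr x'\<close> \<open>y = Inl y'\<close> by simp
      moreover have "dZ x y = dX y' \<theta> + dY \<tau> x'"
        using \<open>x = Inr x'\<close> \<open>y = Inl y'\<close> X.commute Y.commute by simp
      ultimately show ?thesis
        using midpoint_left_right[OF modX b _ _ _ _ _ _ r e, of y' x' "\<lambda>t. g (dZ x y - t)"]
          ends near_x near_y len \<open>x = Inr x'\<close> \<open>y = Inl y'\<close> by (intro weaken) (auto simp: field_simps)
    next
      case (Inr y')
      show ?thesis
        using midpoint_right_right[OF monoY b _ _ geo[unfolded \<open>x = Inr x'\<close> \<open>y = Inr y'\<close>] _ _ _ r e]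
          ends near_x near_y len \<open>x = Inr x'\<close> \<open>y = Inr y'\<close> base_points by (intro weaken) auto
    qed
  qed
qed

lemma glue_modulus_bounds:
  assumes modX: "modulus_wuc X dX \<eta>X" and modY: "modulus_wuc Y dY \<eta>Y" and a: "a \<in> Z"
    and r: "0 < r" and e: "0 < \<epsilon>" "\<epsilon> \<le> 2"
  shows "0 < glue_modulus \<eta>X \<eta>Y \<theta> \<tau> a r \<epsilon> \<and> glue_modulus \<eta>X \<eta>Y \<theta> \<tau> a r \<epsilon> \<le> 1"
proof -
  have e4: "0 < \<epsilon> / 4" "\<epsilon> / 4 \<le> 2" using e by auto
  show ?thesis
  proof (cases a)
    case (Inl b)
    then have "b \<in> X" using a glue_carrier_retracts(1) by fastforce
    then show ?thesis
      using Inl e modulus_wuc_pos[OF modX _ r e] modulus_wuc_pos[OF modX _ r e4]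
        modulus_wuc_pos[OF modY _ r e] base_points by auto
  next
    case (Inr b)
    then have "b \<in> Y" using a glue_carrier_retracts(2) by fastforce
    then show ?thesis
      using Inr e modulus_wuc_pos[OF modY _ r e] modulus_wuc_pos[OF modY _ r e4]
        modulus_wuc_pos[OF modX _ r e] base_points by auto
  qed
qed

lemma midpoint_Inr:
  assumes modY: "modulus_wuc Y dY \<eta>Y" and monoX: "monotone_modulus_wuc X dX \<eta>X" and b: "Inr b \<in> Z"
    and x: "x \<in> Z" and y: "y \<in> Z" and geo: "geodesic_path Z dZ x y g"
    and near_x: "dZ (Inr b) x \<le> r" and near_y: "dZ (Inr b) y \<le> r" and len: "\<epsilon> * r \<le> dZ x y"
    and r: "0 < r" and e: "0 < \<epsilon>" "\<epsilon> \<le> 2"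
  shows "dZ (Inr b) (g (dZ x y / 2)) \<le> (1 - glue_modulus \<eta>X \<eta>Y \<theta> \<tau> (Inr b) r \<epsilon>) * r"
proof -
  interpret swapped: metric_gluing Y dY X dX \<tau> \<theta> by (rule metric_gluing_swap)
  let ?s = "glue_swap \<theta> \<tau>"
  have swap_b: "?s (Inr b) = Inl b" by (simp add: glue_swap_def)
  have geo': "geodesic_path swapped.Z swapped.dZ (?s x) (?s y) (\<lambda>t. ?s (g t))"
    using glue_swap_mem glue_swap_dist by (intro geodesic_path_isometric_image[OF geo x y]) auto
  have dist_b: "swapped.dZ (Inl b) (?s v) = dZ (Inr b) v" for v
    using glue_swap_dist[of "Inr b" v] swap_b by simp
  have "swapped.dZ (Inl b) (?s (g (swapped.dZ (?s x) (?s y) / 2)))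
      \<le> (1 - glue_modulus \<eta>Y \<eta>X \<tau> \<theta> (Inl b) r \<epsilon>) * r"
    by (rule swapped.midpoint_Inl[OF modY monoX _ glue_swap_mem[OF x] glue_swap_mem[OF y] geo' _ _ _ r e])
      (use glue_carrier_retracts(2)[OF b] near_x near_y len in \<open>auto simp: dist_b glue_swap_dist\<close>)
  then show ?thesis by (simp add: dist_b glue_swap_dist)
qed

lemma modulus_wuc_glue:
  assumes monoX: "monotone_modulus_wuc X dX \<eta>X" and monoY: "monotone_modulus_wuc Y dY \<eta>Y"
  shows "modulus_wuc Z dZ (glue_modulus \<eta>X \<eta>Y \<theta> \<tau>)"
proof -
  have modX: "modulus_wuc X dX \<eta>X" and modY: "modulus_wuc Y dY \<eta>Y"
    using monoX monoY unfolding monotone_modulus_wuc_def by auto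
  show ?thesis
    unfolding modulus_wuc_def
  proof (rule conjI; intro ballI allI impI)
    fix a and r \<epsilon> :: real assume "a \<in> Z" "0 < r" "0 < \<epsilon> \<and> \<epsilon> \<le> 2"
    then show "0 < glue_modulus \<eta>X \<eta>Y \<theta> \<tau> a r \<epsilon> \<and> glue_modulus \<eta>X \<eta>Y \<theta> \<tau> a r \<epsilon> \<le> 1"
      using glue_modulus_bounds[OF modX modY] by blast
  next
    fix a x y g and r \<epsilon> :: real
    assume a: "a \<in> Z" and r: "0 < r" and e: "0 < \<epsilon> \<and> \<epsilon> \<le> 2" and x: "x \<in> Z" and y: "y \<in> Z"
      and H: "geodesic_path Z dZ x y g \<and> dZ a x \<le> r \<and> dZ a y \<le> r \<and> \<epsilon> * r \<le> dZ x y"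
    show "dZ a (g (dZ x y / 2)) \<le> (1 - glue_modulus \<eta>X \<eta>Y \<theta> \<tau> a r \<epsilon>) * r"
    proof (cases a)
      case (Inl b)
      then have "b \<in> X" using a glue_carrier_retracts(1) by fastforce
      then show ?thesis using midpoint_Inl[OF modX monoY _ x y] H r e Inl by blast
    next
      case (Inr b)
      then show ?thesis using midpoint_Inr[OF modY monoX _ x y] H r e a by blast
    qed
  qed
qed

end

theorem lemma2p2:
  fixes X :: "'a set" and dX :: "'a \<Rightarrow> 'a \<Rightarrow> real" and \<eta>X :: "'a \<Rightarrow> real \<Rightarrow> real \<Rightarrow> real"
    and Y :: "'b set" and dY :: "'b \<Rightarrow> 'b \<Rightarrow> real" and \<eta>Y :: "'b \<Rightarrow> real \<Rightarrow> real \<Rightarrow> real"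
    and \<theta> :: 'a and \<tau> :: 'b
  assumes "geodesic_space X dX" and "geodesic_space Y dY"
    and "monotone_modulus_wuc X dX \<eta>X" and "monotone_modulus_wuc Y dY \<eta>Y"
    and "\<theta> \<in> X" and "\<tau> \<in> Y"
  shows "weakly_uniformly_convex (glue_carrier X Y \<tau>) (glue_dist dX dY \<theta> \<tau>)
       \<and> modulus_wuc (glue_carrier X Y \<tau>) (glue_dist dX dY \<theta> \<tau>) (glue_modulus \<eta>X \<eta>Y \<theta> \<tau>)"
proof -
  have "metric_gluing X dX Y dY \<theta> \<tau>"
    using assms unfolding geodesic_space_def metric_gluing_def metric_gluing_axioms_def by auto
  then have "modulus_wuc (glue_carrier X Y \<tau>) (glue_dist dX dY \<theta> \<tau>) (glue_modulus \<eta>X \<eta>Y \<theta> \<tau>)"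
    using assms(3,4) by (rule metric_gluing.modulus_wuc_glue)
  then show ?thesis unfolding weakly_uniformly_convex_def by blast
qed

end
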